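(* Let $\mathcal{R}$ be a 2-torsion free unital prime ring containing a nontrivial idempotent $P$ (i.e. $P^2=P$, $P\neq0$, $P\neq I$). If $\phi:\mathcal{R}\to\mathcal{R}$ is an additive mapping such that $\phi(A)\circ B+A\circ\phi(B)=0$ for all $A,B\in\mathcal{R}$ with $AB=BA=0$, then there exist a derivation $\delta:\mathcal{R}\to\mathcal{R}$ and a multiplier $\eta:\mathcal{R}\to\mathcal{R}$ such that $\phi=\delta+\eta$. If moreover $\phi(I)=0$, then $\phi$ is a derivation.
   Context: A ring $\mathcal{R}$ is prime if $A\mathcal{R}B=\{0\}$ implies $A=0$ or $B=0$. 2-torsion free: $2X=0\Rightarrow X=0$. $X\circ Y=XY+YX$. An additive $\delta$ is a derivation if $\delta(XY)=\delta(X)Y+X\delta(Y)$; an additive $\eta$ is a multiplier if $\eta(X)=\eta(I)X=X\eta(I)$ for all $X$. *)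

theory Defs
  imports Main
begin

definition prime_ring :: "'a::ring_1 itself \<Rightarrow> bool" where
  "prime_ring _ \<longleftrightarrow> (\<forall>A B :: 'a. (\<forall>X. A * X * B = 0) \<longrightarrow> A = 0 \<or> B = 0)"

definition two_torsion_free :: "'a::ring_1 itself \<Rightarrow> bool" where
  "two_torsion_free _ \<longleftrightarrow> (\<forall>X :: 'a. 2 * X = 0 \<longrightarrow> X = 0)"

definition jordan_prod :: "'a::ring \<Rightarrow> 'a \<Rightarrow> 'a" (infixl "\<circ>\<^sub>J" 70) where
  "X \<circ>\<^sub>J Y = X * Y + Y * X"

definition additive :: "('a::ring \<Rightarrow> 'a) \<Rightarrow> bool" where
  "additive f \<longleftrightarrow> (\<forall>X Y. f (X + Y) = f X + f Y)"

definition is_derivation :: "('a::ring \<Rightarrow> 'a) \<Rightarrow> bool" where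
  "is_derivation d \<longleftrightarrow> additive d \<and> (\<forall>X Y. d (X * Y) = d X * Y + X * d Y)"

definition is_multiplier :: "('a::ring_1 \<Rightarrow> 'a) \<Rightarrow> bool" where
  "is_multiplier e \<longleftrightarrow> additive e \<and> (\<forall>X. e X = e 1 * X \<and> e X = X * e 1)"

end

theory Submission
  imports Defs
begin

text \<open>Put \<open>Q = 1 - P\<close> and work with the Peirce decomposition \<open>R = P R P + P R Q + Q R P + Q R Q\<close>.
Subtracting the inner derivation \<open>[T, -]\<close>, \<open>T = Q \<phi>(P) P - P \<phi>(P) Q\<close>, makes the image of \<open>P\<close>
block diagonal; the condition for the pair \<open>P, Q\<close> then puts \<open>\<phi>(P)\<close> into \<open>P R P\<close> and \<open>\<phi>(Q)\<close>
into \<open>Q R Q\<close>, and primeness shows that \<open>Z = \<phi>(1) = \<phi>(P) + \<phi>(Q)\<close> is central. The map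
\<open>d = \<phi> - [T, -] - Z \<cdot> -\<close> kills \<open>P\<close> and \<open>Q\<close>. Feeding the condition with pairs built from
Peirce components (typically the orthogonal idempotents \<open>P + x\<close> and \<open>Q - x\<close> for \<open>x \<in> P R Q\<close>)
and cancelling with 2-torsion freeness and primeness, one finds that \<open>d\<close> preserves every corner
and obeys the Leibniz rule on products of corner elements, hence is a derivation.\<close>

definition jordan_zero_product_derivable :: "('a::ring \<Rightarrow> 'a) \<Rightarrow> bool" where
  "jordan_zero_product_derivable d \<longleftrightarrow>
     (\<forall>A B. A * B = 0 \<and> B * A = 0 \<longrightarrow> d A \<circ>\<^sub>J B + A \<circ>\<^sub>J d B = 0)"

definition leibniz_defect :: "('a::ring \<Rightarrow> 'a) \<Rightarrow> 'a \<Rightarrow> 'a \<Rightarrow> 'a" where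
  "leibniz_defect d x y = d (x * y) - d x * y - x * d y"

lemma jordan_zero_product_derivableD:
  "jordan_zero_product_derivable d \<Longrightarrow> A * B = 0 \<Longrightarrow> B * A = 0 \<Longrightarrow>
     d A * B + B * d A + (A * d B + d B * A) = 0"
  unfolding jordan_zero_product_derivable_def jordan_prod_def by blast

lemma jordan_zero_product_derivable_diff:
  assumes "jordan_zero_product_derivable f" and "jordan_zero_product_derivable g"
  shows "jordan_zero_product_derivable (\<lambda>X. f X - g X)"
  unfolding jordan_zero_product_derivable_def
proof (intro allI impI, elim conjE)
  fix A B :: 'a assume AB: "A * B = 0" and BA: "B * A = 0"
  have "(f A - g A) \<circ>\<^sub>J B + A \<circ>\<^sub>J (f B - g B)
      = (f A * B + B * f A + (A * f B + f B * A)) - (g A * B + B * g A + (A * g B + g B * A))"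
    unfolding jordan_prod_def by (simp add: algebra_simps)
  also have "\<dots> = 0"
    using assms[THEN jordan_zero_product_derivableD, OF AB BA] by simp
  finally show "(f A - g A) \<circ>\<^sub>J B + A \<circ>\<^sub>J (f B - g B) = 0" .
qed

lemma derivation_imp_jordan_zero_product_derivable:
  assumes "is_derivation d"
  shows "jordan_zero_product_derivable d"
  unfolding jordan_zero_product_derivable_def
proof (intro allI impI, elim conjE)
  fix A B :: 'a assume AB: "A * B = 0" and BA: "B * A = 0"
  have d0: "d 0 = 0"
    using assms unfolding is_derivation_def additive_def by (metis add_cancel_right_right)
  have "d A * B + A * d B = 0" "d B * A + B * d A = 0"
    using assms AB BA d0 unfolding is_derivation_def by metis+
  moreover have "d A \<circ>\<^sub>J B + A \<circ>\<^sub>J d B = (d A * B + A * d B) + (d B * A + B * d A)"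
    unfolding jordan_prod_def by (simp add: ac_simps)
  ultimately show "d A \<circ>\<^sub>J B + A \<circ>\<^sub>J d B = 0" by simp
qed

lemma central_mult_jordan_zero_product_derivable:
  assumes central: "\<And>X. Z * X = X * Z"
  shows "jordan_zero_product_derivable (\<lambda>X. Z * X)"
  unfolding jordan_zero_product_derivable_def
proof (intro allI impI, elim conjE)
  fix A B :: 'a assume AB: "A * B = 0" and BA: "B * A = 0"
  have "(Z * A) \<circ>\<^sub>J B + A \<circ>\<^sub>J (Z * B) = Z * (A * B) + (B * Z) * A + (A * Z) * B + Z * (B * A)"
    unfolding jordan_prod_def by (simp add: algebra_simps)
  also have "\<dots> = Z * (A * B) + Z * (B * A) + Z * (A * B) + Z * (B * A)"
    using central by (simp add: mult.assoc)
  also have "\<dots> = 0" using AB BA by simp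
  finally show "(Z * A) \<circ>\<^sub>J B + A \<circ>\<^sub>J (Z * B) = 0" .
qed

lemma is_derivation_commutator: "is_derivation (\<lambda>X. T * X - X * (T::'a::ring))"
  unfolding is_derivation_def additive_def by (simp add: algebra_simps)

lemma is_derivation_add:
  "is_derivation d \<Longrightarrow> is_derivation e \<Longrightarrow> is_derivation (\<lambda>X. d X + e X)"
  unfolding is_derivation_def additive_def by (simp add: algebra_simps)

lemma corner_left_absorb:
  assumes "a = E * a * F" and "E * E = E"
  shows "E * a = (a::'a::ring)"
proof -
  have "E * a = (E * E) * a * F" using assms(1) by (metis mult.assoc)
  then show ?thesis using assms by simp
qed

lemma corner_right_absorb:
  assumes "a = E * a * F" and "F * F = F"
  shows "a * F = (a::'a::ring)"
proof -
  have "a * F = E * a * (F * F)" using assms(1) by (metis mult.assoc)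
  then show ?thesis using assms by simp
qed

locale peirce =
  fixes P Q :: "'a::ring_1"
  assumes idem: "P * P = P" and complement: "Q = 1 - P"
    and P_nonzero: "P \<noteq> 0" and Q_nonzero: "Q \<noteq> 0"
    and torsion_free: "two_torsion_free TYPE('a)" and prime: "prime_ring TYPE('a)"
begin

lemma P_plus_Q: "P + Q = 1" by (simp add: complement)

lemma peirce_simps [simp]:
  "P * P = P" "P * (P * z) = P * z" "Q * Q = Q" "Q * (Q * z) = Q * z"
  "P * Q = 0" "P * (Q * z) = 0" "Q * P = 0" "Q * (P * z) = 0"
proof -
  have "Q * Q = Q" "P * Q = 0" "Q * P = 0" by (simp_all add: complement algebra_simps idem)
  then show "P * P = P" "P * (P * z) = P * z" "Q * Q = Q" "Q * (Q * z) = Q * z"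
    "P * Q = 0" "P * (Q * z) = 0" "Q * P = 0" "Q * (P * z) = 0"
    by (simp_all add: idem flip: mult.assoc)
qed

lemma peirce_swap: "peirce Q P"
proof
  show "Q * Q = Q" by simp
  show "P = 1 - Q" by (simp add: complement)
qed (use P_nonzero Q_nonzero torsion_free prime in auto)

lemma double_eq_zero: "a + a = 0 \<Longrightarrow> a = (0::'a)"
  using torsion_free unfolding two_torsion_free_def by (metis mult_2)

lemma prime_zero: "(\<And>X. a * X * b = 0) \<Longrightarrow> a = 0 \<or> b = (0::'a)"
  using prime unfolding prime_ring_def by blast

lemma prime_zero_Q: "(\<And>X. c * X * Q = 0) \<Longrightarrow> c = 0"
  using prime_zero Q_nonzero by blast

lemma peirce_decomp: "a = P * a * P + P * a * Q + Q * a * P + Q * a * Q"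
proof -
  have "a = (P + Q) * a * (P + Q)" by (simp add: P_plus_Q)
  then show ?thesis by (simp add: algebra_simps)
qed

lemma anticommutes_Q_imp_corner:
  assumes "y * Q + Q * y = 0"
  shows "y = P * y * P"
proof -
  have "Q * (y * Q + Q * y) * Q = 0" "P * (y * Q + Q * y) * Q = 0" "Q * (y * Q + Q * y) * P = 0"
    using assms by simp_all
  then have "Q * y * Q + Q * y * Q = 0" and "P * y * Q = 0" and "Q * y * P = 0"
    by (simp_all add: algebra_simps)
  moreover from this(1) have "Q * y * Q = 0" by (rule double_eq_zero)
  ultimately show ?thesis using peirce_decomp[of y] by simp
qed

end

locale peirce_jordan_map = peirce P Q for P Q :: "'a::ring_1" +
  fixes d :: "'a \<Rightarrow> 'a"
  assumes additive: "additive d" and derivable: "jordan_zero_product_derivable d"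
begin

lemma d_add: "d (a + b) = d a + d b"
  using additive unfolding additive_def by blast

lemma d_zero [simp]: "d 0 = 0"
  using d_add[of 0 0] by simp

lemma d_minus: "d (- a) = - d a"
  using d_add[of a "- a"] minus_unique[of "d a" "d (- a)"] by simp

lemma d_diff: "d (a - b) = d a - d b"
  using d_add[of a "- b"] d_minus by simp

lemma zero_product:
  "A * B = 0 \<Longrightarrow> B * A = 0 \<Longrightarrow> d A * B + B * d A + (A * d B + d B * A) = 0"
  using derivable by (rule jordan_zero_product_derivableD)

lemma peirce_jordan_map_swap: "peirce_jordan_map Q P d"
  using peirce_swap additive derivable
  by (simp add: peirce_jordan_map_def peirce_jordan_map_axioms_def)

end

locale peirce_normalized_map = peirce_jordan_map +
  assumes d_P: "d P = 0" and d_Q: "d Q = 0"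
begin

lemma peirce_normalized_map_swap: "peirce_normalized_map Q P d"
  using peirce_jordan_map_swap d_P d_Q
  by (simp add: peirce_normalized_map_def peirce_normalized_map_axioms_def)

lemma d_PP_corner: "d (P * r * P) = P * d (P * r * P) * P"
proof -
  have "d (P * r * P) * Q + Q * d (P * r * P) = 0"
    using zero_product[of "P * r * P" Q] d_Q by (simp add: mult.assoc)
  then show ?thesis by (rule anticommutes_Q_imp_corner)
qed

lemma d_PQ_diagonal_zero:
  shows "P * d (P * r * Q) * P = 0" and "Q * d (P * r * Q) * Q = 0"
proof -
  define x where "x = P * r * Q"
  define y where "y = d x"
  have "y * x + x * y + (x * y + y * x) = 0"
    using zero_product[of x x] unfolding x_def y_def by (simp add: mult.assoc)
  then have "P * (y * x + x * y + (x * y + y * x)) * P = 0"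
    and "Q * (y * x + x * y + (x * y + y * x)) * Q = 0" by simp_all
  then have "P * r * Q * y * P + P * r * Q * y * P = 0"
    and "Q * y * P * r * Q + Q * y * P * r * Q = 0"
    unfolding x_def by (simp_all add: algebra_simps)
  then have xyP: "P * r * Q * y * P = 0" and Qyx: "Q * y * P * r * Q = 0"
    using double_eq_zero by blast+
  have "d (P + x) = y" "d (Q - x) = - y"
    using d_P d_Q by (simp_all add: d_add d_diff y_def)
  then have h: "y * (Q - x) + (Q - x) * y + ((P + x) * (- y) + (- y) * (P + x)) = 0"
    using zero_product[of "P + x" "Q - x"] unfolding x_def by (simp add: algebra_simps)
  let ?S = "y * (Q - x) + (Q - x) * y + ((P + x) * (- y) + (- y) * (P + x))"
  have "P * ?S * P = - ((P * y * P + P * r * Q * y * P) + (P * y * P + P * r * Q * y * P))"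
    unfolding x_def by (simp add: algebra_simps)
  moreover have "P * ?S * P = 0" using h by simp
  ultimately have "(P * y * P + P * r * Q * y * P) + (P * y * P + P * r * Q * y * P) = 0"
    by (metis neg_equal_0_iff_equal)
  with xyP have "P * y * P + P * y * P = 0" by simp
  then show "P * d (P * r * Q) * P = 0"
    unfolding y_def x_def by (rule double_eq_zero)
  have "Q * ?S * Q = (Q * y * Q - Q * y * P * r * Q) + (Q * y * Q - Q * y * P * r * Q)"
    unfolding x_def by (simp add: algebra_simps)
  with h Qyx have "Q * y * Q + Q * y * Q = 0" by simp
  then show "Q * d (P * r * Q) * Q = 0"
    unfolding y_def x_def by (rule double_eq_zero)
qed

lemma d_PQ_QP_zero: "Q * d (P * r * Q) * P = 0"
proof -
  let ?x = "P * r * Q"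
  define y where "y = d ?x"
  have QdP: "Q * d (?x * (Q * s * Q)) * P = Q * s * Q * y * P" for s
  proof -
    let ?z = "Q * s * Q"
    obtain b where b: "d ?z = Q * b * Q"
      using peirce_normalized_map.d_PP_corner[OF peirce_normalized_map_swap] by blast
    define v where "v = d (?x * ?z)"
    have "d (P + ?x) = y" "d (?z - ?x * ?z) = Q * b * Q - v"
      using d_P by (simp_all add: d_add d_diff b y_def v_def)
    moreover have "(P + ?x) * (?z - ?x * ?z) = 0" "(?z - ?x * ?z) * (P + ?x) = 0"
      by (simp_all add: algebra_simps)
    ultimately have S: "y * (?z - ?x * ?z) + (?z - ?x * ?z) * y
        + ((P + ?x) * (Q * b * Q - v) + (Q * b * Q - v) * (P + ?x)) = 0"
      (is "?S = 0") using zero_product by metis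
    have "Q * ?S * P = ?z * y * P - Q * v * P" by (simp add: algebra_simps)
    with S show ?thesis unfolding v_def by simp
  qed
  have "?x * X * (Q * y * P) = 0" for X
  proof -
    define c where "c = ?x * (Q * (Q * X) * Q)"
    have "?x * c = 0" "c * ?x = 0" by (simp_all add: c_def mult.assoc)
    then have S: "y * c + c * y + (?x * d c + d c * ?x) = 0" (is "?S = 0")
      using zero_product[of ?x c] unfolding y_def by simp
    have "P * ?S * P = ?x * (Q * X) * Q * y * P + ?x * (Q * d c * P)"
      by (simp add: algebra_simps c_def)
    also have "Q * d c * P = Q * (Q * X) * Q * y * P" unfolding c_def by (rule QdP)
    finally have "?x * X * (Q * y * P) + ?x * X * (Q * y * P) = 0"
      unfolding S by (simp add: algebra_simps)
    then show ?thesis by (rule double_eq_zero)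
  qed
  then have "?x = 0 \<or> Q * y * P = 0" by (rule prime_zero)
  then show ?thesis unfolding y_def by auto
qed

lemma d_PQ_corner: "d (P * r * Q) = P * d (P * r * Q) * Q"
proof -
  define y where "y = d (P * r * Q)"
  have "P * y * P = 0" "Q * y * Q = 0" "Q * y * P = 0"
    unfolding y_def by (fact d_PQ_diagonal_zero d_PQ_QP_zero)+
  then show ?thesis using peirce_decomp[of y] unfolding y_def by simp
qed

lemma leibniz_PQ_QQ:
  "d (P * r * Q * (Q * s * Q)) = d (P * r * Q) * (Q * s * Q) + P * r * Q * d (Q * s * Q)"
proof -
  let ?x = "P * r * Q" and ?z = "Q * s * Q"
  obtain u where u: "d ?x = P * u * Q" using d_PQ_corner by blast
  have "?x * ?z = P * (r * Q * s) * Q" by (simp add: mult.assoc)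
  then obtain v where v: "d (?x * ?z) = P * v * Q" using d_PQ_corner[of "r * Q * s"] by metis
  obtain b where b: "d ?z = Q * b * Q"
    using peirce_normalized_map.d_PP_corner[OF peirce_normalized_map_swap] by blast
  have "d (P + ?x) = P * u * Q" "d (?z - ?x * ?z) = Q * b * Q - P * v * Q"
    using d_P by (simp_all add: d_add d_diff u v b)
  moreover have "(P + ?x) * (?z - ?x * ?z) = 0" "(?z - ?x * ?z) * (P + ?x) = 0"
    by (simp_all add: algebra_simps)
  ultimately have S: "P * u * Q * (?z - ?x * ?z) + (?z - ?x * ?z) * (P * u * Q)
      + ((P + ?x) * (Q * b * Q - P * v * Q) + (Q * b * Q - P * v * Q) * (P + ?x)) = 0"
    (is "?S = 0") using zero_product by metis
  have "P * ?S * Q = P * u * Q * ?z - P * v * Q + ?x * (Q * b * Q)"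
    by (simp add: algebra_simps)
  with S have "P * v * Q = P * u * Q * ?z + ?x * (Q * b * Q)"
    by (simp add: algebra_simps)
  then show ?thesis by (simp add: u v b)
qed

lemma leibniz_PP_PQ:
  "d (P * s * P * (P * r * Q)) = d (P * s * P) * (P * r * Q) + P * s * P * d (P * r * Q)"
proof -
  let ?a = "P * s * P" and ?x = "P * r * Q"
  obtain u where u: "d ?x = P * u * Q" using d_PQ_corner by blast
  have "?a * ?x = P * (s * P * r) * Q" by (simp add: mult.assoc)
  then obtain w where w: "d (?a * ?x) = P * w * Q" using d_PQ_corner[of "s * P * r"] by metis
  obtain a where a: "d ?a = P * a * P" using d_PP_corner by blast
  have "d (?a + ?a * ?x) = P * a * P + P * w * Q" "d (Q - ?x) = - (P * u * Q)"
    using d_Q by (simp_all add: d_add d_diff a u w)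
  moreover have "(?a + ?a * ?x) * (Q - ?x) = 0" "(Q - ?x) * (?a + ?a * ?x) = 0"
    by (simp_all add: algebra_simps)
  ultimately have S: "(P * a * P + P * w * Q) * (Q - ?x) + (Q - ?x) * (P * a * P + P * w * Q)
      + ((?a + ?a * ?x) * - (P * u * Q) + - (P * u * Q) * (?a + ?a * ?x)) = 0"
    (is "?S = 0") using zero_product by metis
  have "P * ?S * Q = P * w * Q - P * a * P * ?x - ?a * (P * u * Q)"
    by (simp add: algebra_simps)
  with S have "P * w * Q = P * a * P * ?x + ?a * (P * u * Q)"
    by (simp add: algebra_simps)
  then show ?thesis by (simp add: u w a)
qed

lemma leibniz_PP_PP:
  assumes a: "a = P * a * P" and b: "b = P * b * P"
  shows "d (a * b) = d a * b + a * d b"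
proof -
  have "P * (a * b) * P = (P * a) * (b * P)" by (simp add: mult.assoc)
  then have ab: "a * b = P * (a * b) * P"
    using corner_left_absorb[OF a] corner_right_absorb[OF b] by simp
  have d_corner: "d x = P * d x * P" if "x = P * x * P" for x
    using d_PP_corner[of x] unfolding that[symmetric] .
  have leibniz_x: "d (z * x) = d z * x + z * d x" if "z = P * z * P" "x = P * x * Q" for z x
    using leibniz_PP_PQ[of z x] unfolding that[symmetric] .
  obtain m where m: "d (a * b) = P * m * P" using d_corner[OF ab] by blast
  obtain a' where a': "d a = P * a' * P" using d_corner[OF a] by blast
  obtain b' where b': "d b = P * b' * P" using d_corner[OF b] by blast
  define c where "c = d (a * b) - d a * b - a * d b"
  have cP: "c = c * P"
    unfolding c_def m a' b' using corner_right_absorb[OF b] by (simp add: algebra_simps)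
  have "c = 0"
  proof (rule prime_zero_Q)
    fix X
    define x where "x = P * X * Q"
    have x: "x = P * x * Q" by (simp add: x_def mult.assoc)
    have "P * (b * x) * Q = (P * b) * (x * Q)" by (simp add: mult.assoc)
    then have bx: "b * x = P * (b * x) * Q"
      using corner_left_absorb[OF b] corner_right_absorb[OF x] by simp
    have "d (a * b) * x = d a * (b * x) + a * d (b * x) - a * b * d x"
      using leibniz_x[OF ab x] leibniz_x[OF a bx] by (simp add: mult.assoc eq_diff_eq)
    also have "\<dots> = d a * b * x + a * d b * x"
      unfolding leibniz_x[OF b x] by (simp add: algebra_simps)
    finally have "c * x = 0" unfolding c_def by (simp add: algebra_simps)
    have "c * X * Q = c * P * X * Q" using cP by simp
    also have "\<dots> = c * x" by (simp add: x_def mult.assoc)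
    finally show "c * X * Q = 0" using \<open>c * x = 0\<close> by simp
  qed
  then show ?thesis unfolding c_def by (simp add: diff_eq_eq add.commute)
qed

lemma d_one: "d 1 = 0"
  using d_add[of P Q] d_P d_Q P_plus_Q by simp

lemma d_idempotent:
  assumes "E * E = E"
  shows "d E = d E * E + E * d E"
proof -
  have "E * (1 - E) = 0" "(1 - E) * E = 0" using assms by (simp_all add: algebra_simps)
  then have h: "d E * (1 - E) + (1 - E) * d E + (E * - d E + - d E * E) = 0"
    using zero_product[of E "1 - E"] d_one by (simp add: d_diff)
  have "d E * (1 - E) + (1 - E) * d E + (E * - d E + - d E * E)
      = (d E - d E * E - E * d E) + (d E - d E * E - E * d E)"
    by (simp add: algebra_simps)
  with h have "d E - d E * E - E * d E = 0" using double_eq_zero by metis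
  then show ?thesis by (simp add: algebra_simps)
qed

lemma leibniz_defect_PQ_QP:
  "leibniz_defect d (P * r * Q) (Q * s * P)
     = leibniz_defect d (P * r * Q) (Q * s * P) * (P * r * Q) * (Q * s * P)"
proof -
  let ?x = "P * r * Q" and ?y = "Q * s * P"
  obtain u where u: "d ?x = P * u * Q" using d_PQ_corner by blast
  obtain v where v: "d ?y = Q * v * P"
    using peirce_normalized_map.d_PQ_corner[OF peirce_normalized_map_swap] by blast
  have xy: "?x * ?y = P * (r * Q * s) * P" by (simp add: mult.assoc)
  have yx: "?y * ?x = Q * (s * P * r) * Q" by (simp add: mult.assoc)
  obtain w where w: "d (?x * ?y) = P * w * P"
    using d_PP_corner[of "r * Q * s"] unfolding xy by blast
  obtain t where t: "d (?y * ?x) = Q * t * Q"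
    using peirce_normalized_map.d_PP_corner[OF peirce_normalized_map_swap, of "s * P * r"]
    unfolding yx by blast
  have yxy: "d (?y * (?x * ?y)) = d ?y * (?x * ?y) + ?y * d (?x * ?y)"
    using peirce_normalized_map.leibniz_PQ_QQ[OF peirce_normalized_map_swap, of s "r * Q * s"]
    unfolding xy[symmetric] .
  \<comment> \<open>\<open>E\<close> is idempotent, and the \<open>P\<close>-\<open>P\<close> corner of \<open>d E = d E * E + E * d E\<close> is the claim\<close>
  define E where "E = P + ?x + ?y + ?y * ?x - ?x * ?y - ?y * (?x * ?y)"
  have EE: "E * E = E" unfolding E_def by (simp add: algebra_simps)
  have dE: "d E = P * u * Q + Q * v * P + Q * t * Q - P * w * P
      - (Q * v * P * (?x * ?y) + ?y * (P * w * P))"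
    unfolding E_def d_diff d_add d_P yxy u v w t by simp
  have "P * (d E - (d E * E + E * d E)) * P = 0" using d_idempotent[OF EE] by simp
  moreover have "P * (d E - (d E * E + E * d E)) * P =
     (P * w * P - P * u * Q * ?y - ?x * (Q * v * P)) -
     (P * w * P - P * u * Q * ?y - ?x * (Q * v * P)) * ?x * ?y"
    unfolding dE unfolding E_def by (simp add: algebra_simps)
  ultimately show ?thesis unfolding leibniz_defect_def u v w by simp
qed

lemma leibniz_PQ_QP:
  "d (P * r * Q * (Q * s * P)) = d (P * r * Q) * (Q * s * P) + P * r * Q * d (Q * s * P)"
proof -
  define c where "c r' = leibniz_defect d (P * r' * Q) (Q * s * P)" for r'
  have c: "c r' = c r' * (P * r' * Q) * (Q * s * P)" for r'
    unfolding c_def by (rule leibniz_defect_PQ_QP)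
  have "P * (r + r) * Q * (Q * s * P) = P * r * Q * (Q * s * P) + P * r * Q * (Q * s * P)"
    and "P * (r + r) * Q = P * r * Q + P * r * Q" by (simp_all add: algebra_simps)
  then have c_double: "c (r + r) = c r + c r"
    unfolding c_def leibniz_defect_def d_add by (simp add: algebra_simps d_add)
  \<comment> \<open>replacing \<open>r\<close> by \<open>2 r\<close> doubles the left-hand side of \<open>c\<close> but quadruples the right-hand side\<close>
  have "c r + c r = (c r + c r) * (P * (r + r) * Q) * (Q * s * P)"
    using c[of "r + r"] unfolding c_double .
  also have "\<dots> = (c r * (P * r * Q) * (Q * s * P) + c r * (P * r * Q) * (Q * s * P))
      + (c r * (P * r * Q) * (Q * s * P) + c r * (P * r * Q) * (Q * s * P))"
    by (simp add: algebra_simps)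
  also have "\<dots> = (c r + c r) + (c r + c r)" by (simp only: c[of r, symmetric])
  finally have "c r + c r = 0" by simp
  then have "c r = 0" by (rule double_eq_zero)
  then show ?thesis unfolding c_def leibniz_defect_def by (simp add: diff_eq_eq add.commute)
qed

lemma d_peirce_decomp: "d Y = d (P * Y * P) + d (P * Y * Q) + d (Q * Y * P) + d (Q * Y * Q)"
proof -
  have "d Y = d (P * Y * P + P * Y * Q + Q * Y * P + Q * Y * Q)"
    using peirce_decomp[of Y] by (rule arg_cong)
  also have "\<dots> = d (P * Y * P) + d (P * Y * Q) + d (Q * Y * P) + d (Q * Y * Q)"
    unfolding d_add ..
  finally show ?thesis .
qed

lemma leibniz_PP_left: "d (P * r * P * Y) = d (P * r * P) * Y + P * r * P * d Y"
proof -
  have "P * r * P * (P * Y * P) + P * r * P * (P * Y * Q) = P * r * P * Y * (P + Q)"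
    by (simp add: algebra_simps)
  then have Y: "P * r * P * Y = P * r * P * (P * Y * P) + P * r * P * (P * Y * Q)"
    by (simp add: P_plus_Q)
  obtain a where a: "d (P * r * P) = P * a * P" using d_PP_corner by blast
  obtain m where m: "d (P * Y * P) = P * m * P" using d_PP_corner by blast
  obtain n where n: "d (P * Y * Q) = P * n * Q" using d_PQ_corner by blast
  obtain k where k: "d (Q * Y * P) = Q * k * P"
    using peirce_normalized_map.d_PQ_corner[OF peirce_normalized_map_swap] by blast
  obtain q where q: "d (Q * Y * Q) = Q * q * Q"
    using peirce_normalized_map.d_PP_corner[OF peirce_normalized_map_swap] by blast
  have "d (P * r * P * (P * Y * P)) = d (P * r * P) * (P * Y * P) + P * r * P * d (P * Y * P)"
    by (rule leibniz_PP_PP) (simp_all add: mult.assoc)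
  then have "d (P * r * P * Y) = d (P * r * P) * (P * Y * P) + P * r * P * d (P * Y * P)
      + (d (P * r * P) * (P * Y * Q) + P * r * P * d (P * Y * Q))"
    unfolding Y d_add leibniz_PP_PQ by simp
  also have "\<dots> = d (P * r * P) * Y + P * r * P * d Y"
    unfolding d_peirce_decomp[of Y] a m n k q
    by (subst (3) peirce_decomp[of Y], simp add: algebra_simps)
  finally show ?thesis .
qed

lemma leibniz_PQ_left: "d (P * r * Q * Y) = d (P * r * Q) * Y + P * r * Q * d Y"
proof -
  have "P * r * Q * (Q * Y * P) + P * r * Q * (Q * Y * Q) = P * r * Q * Y * (P + Q)"
    by (simp add: algebra_simps)
  then have Y: "P * r * Q * Y = P * r * Q * (Q * Y * P) + P * r * Q * (Q * Y * Q)"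
    by (simp add: P_plus_Q)
  obtain a where a: "d (P * r * Q) = P * a * Q" using d_PQ_corner by blast
  obtain m where m: "d (P * Y * P) = P * m * P" using d_PP_corner by blast
  obtain n where n: "d (P * Y * Q) = P * n * Q" using d_PQ_corner by blast
  obtain k where k: "d (Q * Y * P) = Q * k * P"
    using peirce_normalized_map.d_PQ_corner[OF peirce_normalized_map_swap] by blast
  obtain q where q: "d (Q * Y * Q) = Q * q * Q"
    using peirce_normalized_map.d_PP_corner[OF peirce_normalized_map_swap] by blast
  have "d (P * r * Q * Y) = d (P * r * Q) * (Q * Y * P) + P * r * Q * d (Q * Y * P)
      + (d (P * r * Q) * (Q * Y * Q) + P * r * Q * d (Q * Y * Q))"
    unfolding Y d_add leibniz_PQ_QP leibniz_PQ_QQ ..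
  also have "\<dots> = d (P * r * Q) * Y + P * r * Q * d Y"
    unfolding d_peirce_decomp[of Y] a m n k q
    by (subst (3) peirce_decomp[of Y], simp add: algebra_simps)
  finally show ?thesis .
qed

lemma d_is_derivation: "is_derivation d"
  unfolding is_derivation_def
proof (intro conjI allI)
  show "additive d" by (rule additive)
  fix X Y
  have "X * Y = P * X * P * Y + P * X * Q * Y + Q * X * P * Y + Q * X * Q * Y"
    by (subst peirce_decomp[of X]) (simp add: algebra_simps)
  then have "d (X * Y)
      = d (P * X * P * Y) + d (P * X * Q * Y) + d (Q * X * P * Y) + d (Q * X * Q * Y)"
    by (simp add: d_add)
  also have "\<dots> = (d (P * X * P) + d (P * X * Q) + d (Q * X * P) + d (Q * X * Q)) * Y
      + (P * X * P + P * X * Q + Q * X * P + Q * X * Q) * d Y"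
    unfolding leibniz_PP_left leibniz_PQ_left
      peirce_normalized_map.leibniz_PP_left[OF peirce_normalized_map_swap]
      peirce_normalized_map.leibniz_PQ_left[OF peirce_normalized_map_swap]
    by (simp add: algebra_simps)
  also have "\<dots> = d X * Y + X * d Y"
    using d_peirce_decomp[of X] peirce_decomp[of X] by simp
  finally show "d (X * Y) = d X * Y + X * d Y" .
qed

end

context peirce_jordan_map
begin

lemma diagonal_d_P_imp_corners:
  assumes d_P: "d P = P * a * P + Q * c * Q"
  shows "d P = P * d P * P" and "d Q = Q * d Q * Q"
proof -
  define b where "b = d Q"
  let ?S = "(P * a * P + Q * c * Q) * Q + Q * (P * a * P + Q * c * Q) + (P * b + b * P)"
  have S: "?S = 0" using zero_product[of P Q] unfolding d_P b_def by simp
  have "Q * ?S * Q = Q * c * Q + Q * c * Q" "P * ?S * P = P * b * P + P * b * P"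
    "P * ?S * Q = P * b * Q" "Q * ?S * P = Q * b * P + Q * c * Q * P"
    by (simp_all add: algebra_simps)
  then have "Q * c * Q + Q * c * Q = 0" "P * b * P + P * b * P = 0"
    and PbQ: "P * b * Q = 0" and QbP: "Q * b * P + Q * c * Q * P = 0"
    unfolding S by simp_all
  then have QcQ: "Q * c * Q = 0" and PbP: "P * b * P = 0" using double_eq_zero by blast+
  show "d P = P * d P * P" unfolding d_P QcQ by (simp add: mult.assoc)
  have "b = Q * b * Q" using peirce_decomp[of b] PbP PbQ QbP QcQ by simp
  then show "d Q = Q * d Q * Q" unfolding b_def .
qed

lemma diagonal_intertwines_PQ:
  assumes d_P: "d P = P * a * P" and d_Q: "d Q = Q * b * Q"
  shows "P * a * P * (P * r * Q) = P * r * Q * (Q * b * Q)"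
proof -
  define y where "y = d (P * r * Q)"
  have "d (P + P * r * Q) = P * a * P + y" "d (Q - P * r * Q) = Q * b * Q - y"
    by (simp_all add: d_add d_diff d_P d_Q y_def)
  moreover have "(P + P * r * Q) * (Q - P * r * Q) = 0" "(Q - P * r * Q) * (P + P * r * Q) = 0"
    by (simp_all add: algebra_simps)
  ultimately have S: "(P * a * P + y) * (Q - P * r * Q) + (Q - P * r * Q) * (P * a * P + y)
      + ((P + P * r * Q) * (Q * b * Q - y) + (Q * b * Q - y) * (P + P * r * Q)) = 0"
    (is "?S = 0") using zero_product by metis
  have "P * ?S * P = - ((P * y * P + P * r * Q * y * P) + (P * y * P + P * r * Q * y * P))"
    by (simp add: algebra_simps)
  then have "(P * y * P + P * r * Q * y * P) + (P * y * P + P * r * Q * y * P) = 0"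
    unfolding S by (metis mult_zero_left mult_zero_right neg_equal_0_iff_equal)
  then have "P * y * P + P * r * Q * y * P = 0" by (rule double_eq_zero)
  then have "(P * y * P + P * r * Q * y * P) * (r * Q) = 0" by simp
  then have PyP: "P * y * P * r * Q = - (P * r * Q * y * P * r * Q)"
    by (simp add: distrib_right mult.assoc eq_neg_iff_add_eq_0)
  have "Q * ?S * Q = (Q * y * Q - Q * y * P * r * Q) + (Q * y * Q - Q * y * P * r * Q)"
    by (simp add: algebra_simps)
  then have "(Q * y * Q - Q * y * P * r * Q) + (Q * y * Q - Q * y * P * r * Q) = 0"
    unfolding S by simp
  then have "Q * y * Q - Q * y * P * r * Q = 0" by (rule double_eq_zero)
  then have "P * r * (Q * y * Q) = P * r * (Q * y * P * r * Q)" by simp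
  then have QyQ: "P * r * Q * y * Q = P * r * Q * y * P * r * Q" by (simp add: mult.assoc)
  have "P * ?S * Q = P * r * Q * (Q * b * Q) - P * a * P * (P * r * Q)
      - (P * y * P * r * Q + P * r * Q * y * Q) - (P * y * P * r * Q + P * r * Q * y * Q)"
    by (simp add: algebra_simps)
  also have "P * y * P * r * Q + P * r * Q * y * Q = 0" using PyP QyQ by simp
  finally show ?thesis unfolding S by simp
qed

lemma diagonal_commutes_PP:
  assumes d_P: "d P = P * a * P" and d_Q: "d Q = Q * b * Q"
  shows "(P * a * P + Q * b * Q) * (P * X * P) = P * X * P * (P * a * P + Q * b * Q)"
proof -
  define c where "c = P * a * P * (P * X * P) - P * X * P * (P * a * P)"
  have "c = 0"
  proof (rule prime_zero_Q)
    fix Y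
    have "c * Y * Q = P * a * P * (P * (X * P * Y) * Q) - P * X * P * (P * a * P * (P * Y * Q))"
      unfolding c_def by (simp add: algebra_simps)
    also have "\<dots> = P * (X * P * Y) * Q * (Q * b * Q) - P * X * P * (P * Y * Q * (Q * b * Q))"
      unfolding diagonal_intertwines_PQ[OF d_P d_Q] ..
    also have "\<dots> = 0" by (simp add: algebra_simps)
    finally show "c * Y * Q = 0" .
  qed
  then show ?thesis unfolding c_def by (simp add: algebra_simps)
qed

lemma diagonal_commutes_PQ:
  assumes d_P: "d P = P * a * P" and d_Q: "d Q = Q * b * Q"
  shows "(P * a * P + Q * b * Q) * (P * X * Q) = P * X * Q * (P * a * P + Q * b * Q)"
proof -
  have "(P * a * P + Q * b * Q) * (P * X * Q) = P * a * P * (P * X * Q)"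
    by (simp add: algebra_simps)
  also have "\<dots> = P * X * Q * (Q * b * Q)" by (rule diagonal_intertwines_PQ[OF d_P d_Q])
  also have "\<dots> = P * X * Q * (P * a * P + Q * b * Q)" by (simp add: algebra_simps)
  finally show ?thesis .
qed

lemma diagonal_central:
  assumes d_P: "d P = P * a * P" and d_Q: "d Q = Q * b * Q"
  shows "(P * a * P + Q * b * Q) * X = X * (P * a * P + Q * b * Q)"
proof -
  let ?Z = "P * a * P + Q * b * Q" and ?Z' = "Q * b * Q + P * a * P"
  have "?Z * X = ?Z * (P * X * P) + ?Z * (P * X * Q) + ?Z' * (Q * X * P) + ?Z' * (Q * X * Q)"
    by (subst peirce_decomp[of X]) (simp add: algebra_simps)
  also have "\<dots> = P * X * P * ?Z + P * X * Q * ?Z + Q * X * P * ?Z' + Q * X * Q * ?Z'"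
    unfolding diagonal_commutes_PP[OF d_P d_Q] diagonal_commutes_PQ[OF d_P d_Q]
      peirce_jordan_map.diagonal_commutes_PP[OF peirce_jordan_map_swap d_Q d_P]
      peirce_jordan_map.diagonal_commutes_PQ[OF peirce_jordan_map_swap d_Q d_P] ..
  also have "\<dots> = X * ?Z"
    by (subst (5) peirce_decomp[of X]) (simp add: algebra_simps)
  finally show ?thesis .
qed

lemma d_one_central_and_derivation_remainder:
  shows d_one_central: "d 1 * X = X * d 1"
    and derivation_remainder: "is_derivation (\<lambda>X. d X - d 1 * X)"
proof -
  define T where "T = Q * d P * P - P * d P * Q"
  define d' where "d' X = d X - (T * X - X * T)" for X
  have d'_map: "peirce_jordan_map P Q d'"
  proof unfold_locales
    show "additive d'" unfolding additive_def d'_def by (simp add: d_add algebra_simps)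
    show "jordan_zero_product_derivable d'" unfolding d'_def
      by (intro jordan_zero_product_derivable_diff derivable
          derivation_imp_jordan_zero_product_derivable is_derivation_commutator)
  qed
  interpret d': peirce_jordan_map P Q d' by (fact d'_map)
  have "d' P = P * d P * P + Q * d P * Q"
    unfolding d'_def T_def by (subst (1) peirce_decomp[of "d P"]) (simp add: algebra_simps)
  then have "d' P = P * d' P * P" and "d' Q = Q * d' Q * Q"
    by (fact d'.diagonal_d_P_imp_corners)+
  then obtain a b where a: "d' P = P * a * P" and b: "d' Q = Q * b * Q" by blast
  define Z where "Z = P * a * P + Q * b * Q"
  have central: "Z * X = X * Z" for X unfolding Z_def by (rule d'.diagonal_central[OF a b])
  have d_one: "d 1 = Z"
    using d'.d_add[of P Q] unfolding P_plus_Q d'_def[of 1] a b Z_def by simp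
  have "peirce_normalized_map P Q (\<lambda>X. d' X - Z * X)"
  proof unfold_locales
    show "additive (\<lambda>X. d' X - Z * X)"
      unfolding additive_def by (simp add: d'.d_add algebra_simps)
    show "jordan_zero_product_derivable (\<lambda>X. d' X - Z * X)"
      by (intro jordan_zero_product_derivable_diff d'.derivable
          central_mult_jordan_zero_product_derivable central)
  qed (simp_all add: a b Z_def algebra_simps)
  then have "is_derivation (\<lambda>X. (d' X - Z * X) + (T * X - X * T))"
    by (intro is_derivation_add peirce_normalized_map.d_is_derivation is_derivation_commutator)
  then show "is_derivation (\<lambda>X. d X - d 1 * X)"
    unfolding d_one d'_def by (simp add: algebra_simps)
  show "d 1 * X = X * d 1" unfolding d_one by (rule central)
qed

end

theorem corollary2p9:
  fixes \<phi> :: "'a::ring_1 \<Rightarrow> 'a" and P :: 'a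
  assumes "prime_ring TYPE('a)"
    and "two_torsion_free TYPE('a)"
    and "P * P = P" and "P \<noteq> 0" and "P \<noteq> 1"
    and "additive \<phi>"
    and "\<forall>A B. A * B = 0 \<and> B * A = 0 \<longrightarrow> \<phi> A \<circ>\<^sub>J B + A \<circ>\<^sub>J \<phi> B = 0"
  shows "(\<exists>\<delta> \<eta>. is_derivation \<delta> \<and> is_multiplier \<eta> \<and> (\<forall>X. \<phi> X = \<delta> X + \<eta> X))
       \<and> (\<phi> 1 = 0 \<longrightarrow> is_derivation \<phi>)"
proof -
  interpret peirce_jordan_map P "1 - P" \<phi>
    using assms by unfold_locales (auto simp: jordan_zero_product_derivable_def)
  have "is_multiplier (\<lambda>X. \<phi> 1 * X)"
    unfolding is_multiplier_def additive_def using d_one_central by (simp add: algebra_simps)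
  moreover have "\<phi> X = (\<phi> X - \<phi> 1 * X) + \<phi> 1 * X" for X by simp
  ultimately have "\<exists>\<delta> \<eta>. is_derivation \<delta> \<and> is_multiplier \<eta> \<and> (\<forall>X. \<phi> X = \<delta> X + \<eta> X)"
    using derivation_remainder by blast
  moreover have "is_derivation \<phi>" if "\<phi> 1 = 0"
    using derivation_remainder by (simp add: that)
  ultimately show ?thesis by blast
qed

end
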